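(* For a second-countable well-filtered space $X$ the following are equivalent: (1) $X$ is locally compact. (2) $\mathsf{K}(X)$ is a continuous semilattice, and $\xi_X^\sigma:X\to\Sigma\,\mathsf{K}(X)$, $x\mapsto\uparrow x$, is continuous. (3) $\mathsf{K}(X)$ is a continuous semilattice, and $X$ has property Q. (4) $\mathsf{K}(X)$ is a continuous semilattice. (5) $X$ is core compact.
   Context: Spaces are $T_0$; specialization order $x\le y$ iff $x\in\overline{\{y\}}$; saturated = upper set. $\mathsf{K}(X)$ = nonempty compact saturated subsets ordered by reverse inclusion (suprema, when they exist, are intersections). Scott topology on a poset: upper sets $U$ such that every directed $D$ with existing supremum in $U$ meets $U$; $\Sigma Q$ is $Q$ with it. $a\ll b$ means for every directed $D$ with existing $\bigvee D\ge b$ some $d\in D$ has $d\ge a$; $\mathsf{K}(X)$ is a continuous semilattice if it is directed complete and each $K$ is the directed supremum of $\{L:L\ll K\}$. Well-filtered: for open $U$ and $\mathcal K\subseteq\mathsf{K}(X)$ filtered under inclusion, $\bigcap\mathcal K\subseteq U$ implies some $K\in\mathcal K$ lies in $U$. Property Q: $K_1\ll K_2$ iff $K_2\subseteq\operatorname{int}K_1$. Locally compact: neighborhood bases of compact sets. Core compact: open-set lattice is continuous. *)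

theory Defs
  imports "HOL-Analysis.Analysis"
begin

definition directed_in :: "'p set \<Rightarrow> ('p \<Rightarrow> 'p \<Rightarrow> bool) \<Rightarrow> 'p set \<Rightarrow> bool" where
  "directed_in P le D \<longleftrightarrow> D \<subseteq> P \<and> D \<noteq> {} \<and>
     (\<forall>a\<in>D. \<forall>b\<in>D. \<exists>c\<in>D. le a c \<and> le b c)"

definition is_sup_in :: "'p set \<Rightarrow> ('p \<Rightarrow> 'p \<Rightarrow> bool) \<Rightarrow> 'p set \<Rightarrow> 'p \<Rightarrow> bool" where
  "is_sup_in P le D s \<longleftrightarrow> s \<in> P \<and> (\<forall>d\<in>D. le d s) \<and>
     (\<forall>u\<in>P. (\<forall>d\<in>D. le d u) \<longrightarrow> le s u)"

definition way_below_in :: "'p set \<Rightarrow> ('p \<Rightarrow> 'p \<Rightarrow> bool) \<Rightarrow> 'p \<Rightarrow> 'p \<Rightarrow> bool" where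
  "way_below_in P le a b \<longleftrightarrow>
     (\<forall>D s. directed_in P le D \<and> is_sup_in P le D s \<and> le b s \<longrightarrow> (\<exists>d\<in>D. le a d))"

definition directed_complete_in :: "'p set \<Rightarrow> ('p \<Rightarrow> 'p \<Rightarrow> bool) \<Rightarrow> bool" where
  "directed_complete_in P le \<longleftrightarrow> (\<forall>D. directed_in P le D \<longrightarrow> (\<exists>s. is_sup_in P le D s))"

definition continuous_in :: "'p set \<Rightarrow> ('p \<Rightarrow> 'p \<Rightarrow> bool) \<Rightarrow> bool" where
  "continuous_in P le \<longleftrightarrow> directed_complete_in P le \<and>
     (\<forall>b\<in>P. directed_in P le {a\<in>P. way_below_in P le a b} \<and>
             is_sup_in P le {a\<in>P. way_below_in P le a b} b)"

definition scott_open :: "'p set \<Rightarrow> ('p \<Rightarrow> 'p \<Rightarrow> bool) \<Rightarrow> 'p set \<Rightarrow> bool" where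
  "scott_open P le U \<longleftrightarrow> U \<subseteq> P \<and> (\<forall>x\<in>U. \<forall>y\<in>P. le x y \<longrightarrow> y \<in> U) \<and>
     (\<forall>D s. directed_in P le D \<and> is_sup_in P le D s \<and> s \<in> U \<longrightarrow> D \<inter> U \<noteq> {})"

definition scott_topology :: "'p set \<Rightarrow> ('p \<Rightarrow> 'p \<Rightarrow> bool) \<Rightarrow> 'p topology" where
  "scott_topology P le = topology (scott_open P le)"


lemma istopology_scott_open: "istopology (scott_open P le)"
  unfolding istopology_def
proof (intro conjI allI impI)
  fix S T assume S: "scott_open P le S" and T: "scott_open P le T"
  show "scott_open P le (S \<inter> T)"
    unfolding scott_open_def
  proof (intro conjI ballI impI allI)
    show "S \<inter> T \<subseteq> P" using S unfolding scott_open_def by blast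
  next
    fix x y assume "x \<in> S \<inter> T" "y \<in> P" "le x y"
    then show "y \<in> S \<inter> T" using S T unfolding scott_open_def by blast
  next
    fix D s assume a: "directed_in P le D \<and> is_sup_in P le D s \<and> s \<in> S \<inter> T"
    then obtain d1 d2 where d: "d1 \<in> D \<inter> S" "d2 \<in> D \<inter> T"
      using S T unfolding scott_open_def by blast
    then obtain c where c: "c \<in> D" "le d1 c" "le d2 c"
      using a unfolding directed_in_def by blast
    have "c \<in> P" using a c unfolding directed_in_def by blast
    then have "c \<in> S \<inter> T" using S T c d unfolding scott_open_def by blast
    then show "D \<inter> (S \<inter> T) \<noteq> {}" using c by blast
  qed
next
  fix K assume K: "\<forall>U\<in>K. scott_open P le U"
  show "scott_open P le (\<Union>K)"
    unfolding scott_open_def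
  proof (intro conjI ballI impI allI)
    show "\<Union>K \<subseteq> P" using K unfolding scott_open_def by blast
  next
    fix x y assume "x \<in> \<Union>K" "y \<in> P" "le x y"
    then show "y \<in> \<Union>K" using K unfolding scott_open_def by blast
  next
    fix D s assume a: "directed_in P le D \<and> is_sup_in P le D s \<and> s \<in> \<Union>K"
    then obtain U where "U \<in> K" "s \<in> U" by blast
    then have "D \<inter> U \<noteq> {}" using K a unfolding scott_open_def by blast
    then show "D \<inter> \<Union>K \<noteq> {}" using \<open>U \<in> K\<close> by blast
  qed
qed

lemma openin_scott_topology: "openin (scott_topology P le) U \<longleftrightarrow> scott_open P le U"
  unfolding scott_topology_def by (simp add: istopology_scott_open)

definition spec_le :: "'a topology \<Rightarrow> 'a \<Rightarrow> 'a \<Rightarrow> bool" where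
  "spec_le X x y \<longleftrightarrow> x \<in> topspace X \<and> y \<in> topspace X \<and> x \<in> X closure_of {y}"

definition saturated_in :: "'a topology \<Rightarrow> 'a set \<Rightarrow> bool" where
  "saturated_in X A \<longleftrightarrow> A \<subseteq> topspace X \<and> (\<forall>x\<in>A. \<forall>y. spec_le X x y \<longrightarrow> y \<in> A)"

definition KX :: "'a topology \<Rightarrow> 'a set set" where
  "KX X = {K. K \<noteq> {} \<and> compactin X K \<and> saturated_in X K}"

definition KX_le :: "'a set \<Rightarrow> 'a set \<Rightarrow> bool" where
  "KX_le K L \<longleftrightarrow> L \<subseteq> K"

definition up_point :: "'a topology \<Rightarrow> 'a \<Rightarrow> 'a set" where
  "up_point X x = {y. spec_le X x y}"

definition well_filtered :: "'a topology \<Rightarrow> bool" where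
  "well_filtered X \<longleftrightarrow>
     (\<forall>U \<K>. openin X U \<and> \<K> \<subseteq> KX X \<and> \<K> \<noteq> {} \<and>
        (\<forall>A\<in>\<K>. \<forall>B\<in>\<K>. \<exists>C\<in>\<K>. C \<subseteq> A \<and> C \<subseteq> B) \<and> \<Inter>\<K> \<subseteq> U
        \<longrightarrow> (\<exists>K\<in>\<K>. K \<subseteq> U))"

definition property_Q :: "'a topology \<Rightarrow> bool" where
  "property_Q X \<longleftrightarrow> (\<forall>K1\<in>KX X. \<forall>K2\<in>KX X.
      way_below_in (KX X) KX_le K1 K2 \<longleftrightarrow> K2 \<subseteq> X interior_of K1)"

definition core_compact :: "'a topology \<Rightarrow> bool" where
  "core_compact X \<longleftrightarrow> continuous_in {U. openin X U} (\<subseteq>)"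

end

theory Submission
  imports Defs
begin

text \<open>Well-filteredness makes directed suprema in \<open>K(X)\<close> intersections. If \<open>X\<close> is locally
  compact, the compact saturated neighbourhoods of \<open>K \<in> K(X)\<close> form a filtered family with
  intersection \<open>K\<close>; this yields property Q, continuity of \<open>K(X)\<close>, Scott continuity of
  \<open>x \<mapsto> \<up>x\<close> and core compactness. If \<open>K(X)\<close> is continuous, every \<open>K \<ll> \<up>x\<close> is a
  neighbourhood of \<open>x\<close>: otherwise, by first countability, a sequence outside \<open>K\<close> converging
  to \<open>x\<close> gives a filtered family of compact saturated sets above \<open>\<up>x\<close> none of which lies in \<open>K\<close>;
  so \<open>X\<close> is locally compact. If \<open>X\<close> is core compact, repeated interpolation \<open>x \<in> V \<ll> \<dots> \<ll> W\<^sub>1 \<ll> W\<close>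
  produces a descending chain of open sets whose intersection lies between \<open>V\<close> and \<open>W\<close>. It is
  compact because every open set containing it contains a member of the chain: otherwise Zorn's
  lemma gives a prime open set avoiding the chain, and in a second-countable well-filtered space
  the complement of a prime open set has a generic point, which lies in the intersection.\<close>

lemma spec_le_iff_openin:
  "spec_le X x y \<longleftrightarrow> x \<in> topspace X \<and> y \<in> topspace X \<and> (\<forall>U. openin X U \<and> x \<in> U \<longrightarrow> y \<in> U)"
  unfolding spec_le_def in_closure_of by auto

lemma openin_spec_le_closed: "openin X U \<Longrightarrow> x \<in> U \<Longrightarrow> spec_le X x y \<Longrightarrow> y \<in> U"
  unfolding spec_le_iff_openin by blast

lemma spec_le_refl: "x \<in> topspace X \<Longrightarrow> spec_le X x x"
  unfolding spec_le_iff_openin by blast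

definition upper_closure :: "'a topology \<Rightarrow> 'a set \<Rightarrow> 'a set" where
  "upper_closure X C = {y. \<exists>x\<in>C. spec_le X x y}"

lemma up_point_eq_upper_closure: "up_point X x = upper_closure X {x}"
  unfolding up_point_def upper_closure_def by simp

lemma upper_closure_mono: "C \<subseteq> C' \<Longrightarrow> upper_closure X C \<subseteq> upper_closure X C'"
  unfolding upper_closure_def by blast

lemma subset_upper_closure: "C \<subseteq> topspace X \<Longrightarrow> C \<subseteq> upper_closure X C"
  unfolding upper_closure_def by (auto intro: spec_le_refl)

lemma upper_closure_subset_openin: "openin X W \<Longrightarrow> C \<subseteq> W \<Longrightarrow> upper_closure X C \<subseteq> W"
  unfolding upper_closure_def by (auto intro: openin_spec_le_closed)

lemma saturated_upper_closure: "saturated_in X (upper_closure X C)"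
  unfolding saturated_in_def upper_closure_def spec_le_iff_openin by auto

lemma compactin_upper_closure:
  assumes "compactin X C"
  shows "compactin X (upper_closure X C)"
  unfolding compactin_def
proof (intro conjI allI impI)
  show "upper_closure X C \<subseteq> topspace X"
    using saturated_upper_closure[of X C] unfolding saturated_in_def by (rule conjunct1)
next
  fix \<U> assume \<U>: "(\<forall>U\<in>\<U>. openin X U) \<and> upper_closure X C \<subseteq> \<Union>\<U>"
  have "C \<subseteq> \<Union>\<U>"
    using subset_upper_closure[OF compactin_subset_topspace[OF assms]] \<U> by (meson subset_trans)
  then obtain \<F> where \<F>: "finite \<F>" "\<F> \<subseteq> \<U>" "C \<subseteq> \<Union>\<F>"
    using compactinD[OF assms, of \<U>] \<U> by auto
  have "openin X (\<Union>\<F>)"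
    using \<F>(2) \<U> by (intro openin_Union) blast
  then have "upper_closure X C \<subseteq> \<Union>\<F>"
    using \<F>(3) by (rule upper_closure_subset_openin)
  with \<F> show "\<exists>\<F>. finite \<F> \<and> \<F> \<subseteq> \<U> \<and> upper_closure X C \<subseteq> \<Union>\<F>" by blast
qed

lemma upper_closure_in_KX:
  assumes "compactin X C" "C \<noteq> {}"
  shows "upper_closure X C \<in> KX X"
proof -
  have "C \<subseteq> upper_closure X C"
    using subset_upper_closure[OF compactin_subset_topspace[OF assms(1)]] .
  then show ?thesis
    unfolding KX_def using assms compactin_upper_closure saturated_upper_closure by auto
qed

lemma KXD:
  assumes "K \<in> KX X"
  shows "K \<noteq> {}" "compactin X K" "saturated_in X K" "K \<subseteq> topspace X"
  using assms unfolding KX_def saturated_in_def by auto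

lemma up_point_in_KX: "x \<in> topspace X \<Longrightarrow> up_point X x \<in> KX X"
  unfolding up_point_eq_upper_closure by (rule upper_closure_in_KX) auto

lemma mem_up_point: "x \<in> topspace X \<Longrightarrow> x \<in> up_point X x"
  unfolding up_point_def by (simp add: spec_le_refl)

lemma up_point_subset_openin: "openin X W \<Longrightarrow> x \<in> W \<Longrightarrow> up_point X x \<subseteq> W"
  unfolding up_point_def by (auto intro: openin_spec_le_closed)

lemma saturated_in_separate_point:
  assumes "saturated_in X K" "y \<in> topspace X" "y \<notin> K"
  obtains W where "openin X W" "K \<subseteq> W" "y \<notin> W"
proof -
  have "\<forall>x\<in>K. \<exists>T. openin X T \<and> x \<in> T \<and> y \<notin> T"
    using assms unfolding saturated_in_def spec_le_iff_openin by blast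
  then obtain T where T: "\<forall>x\<in>K. openin X (T x) \<and> x \<in> T x \<and> y \<notin> T x"
    by (rule bchoice[elim_format]) blast
  show thesis
    by (rule that[of "\<Union>(T ` K)"]) (use T in auto)
qed

section \<open>\<open>K(X)\<close> in a well-filtered space\<close>

lemma directed_in_KX_iff:
  "directed_in (KX X) KX_le D \<longleftrightarrow>
     D \<subseteq> KX X \<and> D \<noteq> {} \<and> (\<forall>A\<in>D. \<forall>B\<in>D. \<exists>C\<in>D. C \<subseteq> A \<and> C \<subseteq> B)"
  unfolding directed_in_def KX_le_def by simp

lemma directed_in_KX_decseq:
  assumes "\<And>n. Q n \<in> KX X" "decseq Q"
  shows "directed_in (KX X) KX_le (range Q)"
  unfolding directed_in_KX_iff
proof (intro conjI ballI)
  fix A B assume "A \<in> range Q" "B \<in> range Q"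
  then obtain i j where "A = Q i" "B = Q j" by blast
  then show "\<exists>C\<in>range Q. C \<subseteq> A \<and> C \<subseteq> B"
    using decseqD[OF \<open>decseq Q\<close>, of i "max i j"] decseqD[OF \<open>decseq Q\<close>, of j "max i j"] by auto
qed (use assms in auto)

lemma well_filteredD:
  assumes "well_filtered X" "openin X U" "directed_in (KX X) KX_le D" "\<Inter>D \<subseteq> U"
  shows "\<exists>K\<in>D. K \<subseteq> U"
  using assms unfolding well_filtered_def directed_in_KX_iff by blast

lemma well_filtered_Inter_in_KX:
  assumes wf: "well_filtered X" and D: "directed_in (KX X) KX_le D"
  shows "\<Inter>D \<in> KX X"
proof -
  have DK: "D \<subseteq> KX X" "D \<noteq> {}" using D unfolding directed_in_KX_iff by auto
  then obtain K0 where "K0 \<in> D" by blast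
  then have "K0 \<subseteq> topspace X" using DK(1) KXD(4)[of K0 X] by blast
  with \<open>K0 \<in> D\<close> have sub: "\<Inter>D \<subseteq> topspace X" by blast
  have "\<Inter>D \<noteq> {}"
  proof
    assume "\<Inter>D = {}"
    then obtain K where "K \<in> D" "K \<subseteq> {}" using well_filteredD[OF wf openin_empty D] by auto
    then show False using DK(1) KXD(1)[of K X] by blast
  qed
  moreover have "compactin X (\<Inter>D)"
    unfolding compactin_def
  proof (intro conjI allI impI sub)
    fix \<U> assume "(\<forall>U\<in>\<U>. openin X U) \<and> \<Inter>D \<subseteq> \<Union>\<U>"
    then have \<U>: "\<And>U. U \<in> \<U> \<Longrightarrow> openin X U" "\<Inter>D \<subseteq> \<Union>\<U>" by auto
    then have "openin X (\<Union>\<U>)" by (intro openin_Union)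
    then obtain K where K: "K \<in> D" "K \<subseteq> \<Union>\<U>"
      using well_filteredD[OF wf _ D \<U>(2)] by blast
    then have "compactin X K" using DK(1) KXD(2)[of K X] by blast
    then obtain \<F> where \<F>: "finite \<F>" "\<F> \<subseteq> \<U>" "K \<subseteq> \<Union>\<F>"
      using compactinD[OF _ \<U>(1) K(2)] by blast
    have "\<Inter>D \<subseteq> \<Union>\<F>" using Inter_lower[OF K(1)] \<F>(3) by (rule order_trans)
    with \<F>(1,2) show "\<exists>\<F>. finite \<F> \<and> \<F> \<subseteq> \<U> \<and> \<Inter>D \<subseteq> \<Union>\<F>" by blast
  qed
  moreover have "saturated_in X (\<Inter>D)"
    unfolding saturated_in_def
  proof (intro conjI sub ballI allI impI InterI)
    fix x y K assume "x \<in> \<Inter>D" "spec_le X x y" "K \<in> D"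
    then have "saturated_in X K" using DK(1) KXD(3)[of K X] by blast
    with \<open>x \<in> \<Inter>D\<close> \<open>spec_le X x y\<close> \<open>K \<in> D\<close> show "y \<in> K"
      unfolding saturated_in_def by blast
  qed
  ultimately show ?thesis unfolding KX_def by blast
qed

lemma is_sup_in_KX_iff:
  assumes "\<Inter>D \<in> KX X"
  shows "is_sup_in (KX X) KX_le D s \<longleftrightarrow> s = \<Inter>D"
proof
  assume "is_sup_in (KX X) KX_le D s"
  then have "s \<subseteq> \<Inter>D" "\<Inter>D \<subseteq> s"
    using assms unfolding is_sup_in_def KX_le_def by (blast, blast)
  then show "s = \<Inter>D" by (rule antisym)
qed (use assms in \<open>auto simp: is_sup_in_def KX_le_def\<close>)

lemma directed_complete_KX:
  assumes "well_filtered X"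
  shows "directed_complete_in (KX X) KX_le"
  unfolding directed_complete_in_def
proof (intro allI impI)
  fix D assume "directed_in (KX X) KX_le D"
  then have "is_sup_in (KX X) KX_le D (\<Inter>D)"
    using is_sup_in_KX_iff well_filtered_Inter_in_KX[OF assms] by blast
  then show "\<exists>s. is_sup_in (KX X) KX_le D s" ..
qed

lemma way_below_KX_iff:
  assumes "well_filtered X"
  shows "way_below_in (KX X) KX_le A B \<longleftrightarrow>
     (\<forall>D. directed_in (KX X) KX_le D \<and> \<Inter>D \<subseteq> B \<longrightarrow> (\<exists>K\<in>D. K \<subseteq> A))"
proof -
  have "is_sup_in (KX X) KX_le D s \<longleftrightarrow> s = \<Inter>D" if "directed_in (KX X) KX_le D" for D s
    using is_sup_in_KX_iff well_filtered_Inter_in_KX[OF assms that] by blast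
  then show ?thesis
    unfolding way_below_in_def KX_le_def by auto
qed

lemma way_below_KX_if_subset_interior:
  assumes "well_filtered X" "B \<subseteq> X interior_of A"
  shows "way_below_in (KX X) KX_le A B"
  unfolding way_below_KX_iff[OF assms(1)]
proof (intro allI impI)
  fix D assume D: "directed_in (KX X) KX_le D \<and> \<Inter>D \<subseteq> B"
  then have "\<Inter>D \<subseteq> X interior_of A" using assms(2) by (meson order_trans)
  then obtain K where "K \<in> D" "K \<subseteq> X interior_of A"
    using well_filteredD[OF assms(1) openin_interior_of] D by blast
  moreover have "X interior_of A \<subseteq> A" by (rule interior_of_subset)
  ultimately show "\<exists>K\<in>D. K \<subseteq> A" by blast
qed

section \<open>The lattice of open sets\<close>

abbreviation way_below_open :: "'a topology \<Rightarrow> 'a set \<Rightarrow> 'a set \<Rightarrow> bool" where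
  "way_below_open X V U \<equiv> way_below_in {U. openin X U} (\<subseteq>) V U"

definition directed_opens :: "'a topology \<Rightarrow> 'a set set \<Rightarrow> bool" where
  "directed_opens X D \<longleftrightarrow> D \<noteq> {} \<and> (\<forall>d\<in>D. openin X d) \<and> (\<forall>a\<in>D. \<forall>b\<in>D. \<exists>c\<in>D. a \<subseteq> c \<and> b \<subseteq> c)"

lemma directed_in_opens_iff: "directed_in {U. openin X U} (\<subseteq>) D \<longleftrightarrow> directed_opens X D"
  unfolding directed_in_def directed_opens_def by auto

lemma is_sup_in_opens_iff:
  assumes "\<forall>d\<in>D. openin X d"
  shows "is_sup_in {U. openin X U} (\<subseteq>) D s \<longleftrightarrow> s = \<Union>D"
proof
  assume "is_sup_in {U. openin X U} (\<subseteq>) D s"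
  moreover have "openin X (\<Union>D)" using assms by blast
  ultimately have "s \<subseteq> \<Union>D" "\<Union>D \<subseteq> s" unfolding is_sup_in_def by (blast, blast)
  then show "s = \<Union>D" by (rule antisym)
qed (use assms in \<open>auto simp: is_sup_in_def\<close>)

lemma way_below_open_iff:
  "way_below_open X V U \<longleftrightarrow> (\<forall>D. directed_opens X D \<and> U \<subseteq> \<Union>D \<longrightarrow> (\<exists>d\<in>D. V \<subseteq> d))"
proof -
  have sup: "is_sup_in {U. openin X U} (\<subseteq>) D s \<longleftrightarrow> s = \<Union>D" if "directed_opens X D" for D s
    using that unfolding directed_opens_def by (intro is_sup_in_opens_iff) blast
  show ?thesis
    unfolding way_below_in_def directed_in_opens_iff
  proof (intro iffI allI impI)
    fix D assume "\<forall>D s. directed_opens X D \<and> is_sup_in {U. openin X U} (\<subseteq>) D s \<and> U \<subseteq> s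
                    \<longrightarrow> (\<exists>d\<in>D. V \<subseteq> d)"
      and D: "directed_opens X D \<and> U \<subseteq> \<Union>D"
    moreover have "is_sup_in {U. openin X U} (\<subseteq>) D (\<Union>D)" using sup D by blast
    ultimately show "\<exists>d\<in>D. V \<subseteq> d" using D by blast
  next
    fix D s assume "\<forall>D. directed_opens X D \<and> U \<subseteq> \<Union>D \<longrightarrow> (\<exists>d\<in>D. V \<subseteq> d)"
      and D: "directed_opens X D \<and> is_sup_in {U. openin X U} (\<subseteq>) D s \<and> U \<subseteq> s"
    moreover have "s = \<Union>D" using sup D by blast
    ultimately show "\<exists>d\<in>D. V \<subseteq> d" using D by blast
  qed
qed

lemma way_below_openD:
  "way_below_open X V U \<Longrightarrow> directed_opens X D \<Longrightarrow> U \<subseteq> \<Union>D \<Longrightarrow> \<exists>d\<in>D. V \<subseteq> d"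
  unfolding way_below_open_iff by blast

lemma way_below_openI:
  "(\<And>D. directed_opens X D \<Longrightarrow> U \<subseteq> \<Union>D \<Longrightarrow> \<exists>d\<in>D. V \<subseteq> d) \<Longrightarrow> way_below_open X V U"
  unfolding way_below_open_iff by blast

lemma directed_opens_finite_bound:
  assumes D: "directed_opens X D" and "finite F" "F \<subseteq> D"
  shows "\<exists>d\<in>D. \<Union>F \<subseteq> d"
  using assms(2,3)
proof (induction F rule: finite_induct)
  case empty
  then show ?case using D unfolding directed_opens_def by auto
next
  case (insert x F)
  then obtain d where d: "d \<in> D" "\<Union>F \<subseteq> d" by auto
  have "x \<in> D" using insert.prems by auto
  then obtain c where c: "c \<in> D" "x \<subseteq> c" "d \<subseteq> c"
    using D d(1) unfolding directed_opens_def by blast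
  have "\<Union>(insert x F) \<subseteq> c" using c(2,3) d(2) by auto
  with c(1) show ?case by blast
qed

lemma way_below_open_imp_subset:
  assumes "openin X U" "way_below_open X V U"
  shows "V \<subseteq> U"
proof -
  have "directed_opens X {U}" using assms(1) unfolding directed_opens_def by auto
  then show ?thesis using way_below_openD[OF assms(2), of "{U}"] by auto
qed

lemma way_below_open_mono:
  assumes "way_below_open X V U" "V' \<subseteq> V" "U \<subseteq> U'"
  shows "way_below_open X V' U'"
proof (rule way_below_openI)
  fix D assume D: "directed_opens X D" "U' \<subseteq> \<Union>D"
  have "U \<subseteq> \<Union>D" using assms(3) D(2) by (rule order_trans)
  then obtain d where "d \<in> D" "V \<subseteq> d" using way_below_openD[OF assms(1) D(1)] by blast
  moreover have "V' \<subseteq> d" using assms(2) \<open>V \<subseteq> d\<close> by (rule order_trans)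
  ultimately show "\<exists>d\<in>D. V' \<subseteq> d" by blast
qed

lemma way_below_open_empty: "way_below_open X {} U"
  by (rule way_below_openI) (auto simp: directed_opens_def)

lemma way_below_open_Un:
  assumes "way_below_open X V1 U" "way_below_open X V2 U"
  shows "way_below_open X (V1 \<union> V2) U"
proof (rule way_below_openI)
  fix D assume D: "directed_opens X D" "U \<subseteq> \<Union>D"
  obtain d1 d2 where d: "d1 \<in> D" "V1 \<subseteq> d1" "d2 \<in> D" "V2 \<subseteq> d2"
    using way_below_openD[OF assms(1) D] way_below_openD[OF assms(2) D] by blast
  then obtain c where c: "c \<in> D" "d1 \<subseteq> c" "d2 \<subseteq> c"
    using D(1) unfolding directed_opens_def by blast
  have "V1 \<union> V2 \<subseteq> c" using c(2,3) d(2,4) by auto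
  with c(1) show "\<exists>d\<in>D. V1 \<union> V2 \<subseteq> d" by blast
qed

lemma way_below_open_if_compactin_between:
  assumes "compactin X C" "V \<subseteq> C" "C \<subseteq> U"
  shows "way_below_open X V U"
proof (rule way_below_openI)
  fix D assume D: "directed_opens X D" "U \<subseteq> \<Union>D"
  have CD: "C \<subseteq> \<Union>D" using assms(3) D(2) by (rule order_trans)
  have "\<And>d. d \<in> D \<Longrightarrow> openin X d" using D(1) unfolding directed_opens_def by blast
  from compactinD[OF assms(1) this CD]
  obtain F where F: "finite F" "F \<subseteq> D" "C \<subseteq> \<Union>F" by blast
  obtain d where d: "d \<in> D" "\<Union>F \<subseteq> d"
    using directed_opens_finite_bound[OF D(1) F(1,2)] ..
  have "V \<subseteq> d" using assms(2) F(3) d(2) by auto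
  with d(1) show "\<exists>d\<in>D. V \<subseteq> d" by blast
qed

lemma core_compact_iff:
  "core_compact X \<longleftrightarrow>
     (\<forall>U x. openin X U \<and> x \<in> U \<longrightarrow> (\<exists>V. openin X V \<and> way_below_open X V U \<and> x \<in> V))"
    (is "_ \<longleftrightarrow> ?approx")
proof -
  define A where "A U = {V\<in>{U. openin X U}. way_below_open X V U}" for U
  have open_A: "\<forall>V\<in>A U. openin X V" for U unfolding A_def by blast
  have sup_A: "is_sup_in {U. openin X U} (\<subseteq>) (A U) U \<longleftrightarrow> U \<subseteq> \<Union>(A U)"
    if "openin X U" for U
  proof
    assume "is_sup_in {U. openin X U} (\<subseteq>) (A U) U"
    then show "U \<subseteq> \<Union>(A U)" unfolding is_sup_in_opens_iff[OF open_A] by (rule equalityD1)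
  next
    assume "U \<subseteq> \<Union>(A U)"
    moreover have "\<Union>(A U) \<subseteq> U" unfolding A_def using way_below_open_imp_subset[OF that] by auto
    ultimately show "is_sup_in {U. openin X U} (\<subseteq>) (A U) U"
      unfolding is_sup_in_opens_iff[OF open_A] by (rule antisym)
  qed
  have "directed_opens X (A U)" for U
    unfolding directed_opens_def
  proof (intro conjI open_A ballI)
    have "{} \<in> A U" unfolding A_def using way_below_open_empty by simp
    then show "A U \<noteq> {}" by blast
  next
    fix a b assume "a \<in> A U" "b \<in> A U"
    then have "a \<union> b \<in> A U" unfolding A_def by (simp add: openin_Un way_below_open_Un)
    then show "\<exists>c\<in>A U. a \<subseteq> c \<and> b \<subseteq> c" by blast
  qed
  then have dir_A: "directed_in {U. openin X U} (\<subseteq>) (A U)" for U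
    unfolding directed_in_opens_iff .
  have dcpo: "directed_complete_in {U. openin X U} (\<subseteq>)"
    unfolding directed_complete_in_def directed_in_opens_iff
  proof (intro allI impI)
    fix D assume "directed_opens X D"
    then have "\<forall>d\<in>D. openin X d" unfolding directed_opens_def by blast
    then have "is_sup_in {U. openin X U} (\<subseteq>) D (\<Union>D)"
      by (simp add: is_sup_in_opens_iff)
    then show "\<exists>s. is_sup_in {U. openin X U} (\<subseteq>) D s" ..
  qed
  have "core_compact X \<longleftrightarrow> (\<forall>U. openin X U \<longrightarrow> U \<subseteq> \<Union>(A U))"
    unfolding core_compact_def continuous_in_def A_def[symmetric] using dir_A dcpo sup_A by simp
  also have "\<dots> \<longleftrightarrow> ?approx" unfolding A_def by auto
  finally show ?thesis .
qed

text \<open>Interpolation: the open sets \<open>V'\<close> admitting some \<open>V' \<ll> W' \<ll> U\<close> form a directed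
  family covering \<open>U\<close>, so \<open>V \<ll> U\<close> puts \<open>V\<close> below one of them.\<close>

lemma way_below_open_interpolate:
  assumes cc: "core_compact X" and U: "openin X U" and VU: "way_below_open X V U"
  obtains W where "openin X W" "way_below_open X V W" "way_below_open X W U"
proof -
  define S where "S = {V'. openin X V' \<and> (\<exists>W'. openin X W' \<and> way_below_open X V' W'
                                           \<and> way_below_open X W' U)}"
  have "directed_opens X S"
    unfolding directed_opens_def
  proof (intro conjI ballI)
    have "{} \<in> S" unfolding S_def using way_below_open_empty[of X "{}"] way_below_open_empty[of X U]
      by auto
    then show "S \<noteq> {}" by blast
  next
    fix a b assume "a \<in> S" "b \<in> S"
    then obtain Wa Wb where a: "openin X a" "openin X Wa" "way_below_open X a Wa" "way_below_open X Wa U"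
      and b: "openin X b" "openin X Wb" "way_below_open X b Wb" "way_below_open X Wb U"
      unfolding S_def by blast
    have "way_below_open X (a \<union> b) (Wa \<union> Wb)"
      using way_below_open_mono[OF a(3), of a "Wa \<union> Wb"] way_below_open_mono[OF b(3), of b "Wa \<union> Wb"]
      by (simp add: way_below_open_Un)
    moreover have "way_below_open X (Wa \<union> Wb) U" using a(4) b(4) by (rule way_below_open_Un)
    ultimately have "a \<union> b \<in> S" unfolding S_def using a(1,2) b(1,2) by blast
    then show "\<exists>c\<in>S. a \<subseteq> c \<and> b \<subseteq> c" by blast
  qed (simp add: S_def)
  moreover have "U \<subseteq> \<Union>S"
  proof
    fix x assume "x \<in> U"
    then obtain W' where W': "openin X W'" "way_below_open X W' U" "x \<in> W'"
      using cc U unfolding core_compact_iff by blast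
    then obtain V' where "openin X V'" "way_below_open X V' W'" "x \<in> V'"
      using cc unfolding core_compact_iff by blast
    then show "x \<in> \<Union>S" unfolding S_def using W' by blast
  qed
  ultimately obtain d where "d \<in> S" "V \<subseteq> d" using way_below_openD[OF VU] by blast
  then obtain W where "openin X W" "way_below_open X d W" "way_below_open X W U"
    unfolding S_def by blast
  with \<open>V \<subseteq> d\<close> show thesis
    using that way_below_open_mono[of X d W V W] by blast
qed

section \<open>Consequences of local compactness\<close>

lemma topspace_scott_topology: "topspace (scott_topology P le) = P"
proof -
  have "scott_open P le P" unfolding scott_open_def directed_in_def by blast
  then have "P \<subseteq> topspace (scott_topology P le)"
    using openin_subset openin_scott_topology by metis
  moreover have "topspace (scott_topology P le) \<subseteq> P"
    using openin_topspace[of "scott_topology P le"] unfolding openin_scott_topology scott_open_def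
    by (rule conjunct1)
  ultimately show ?thesis by (rule antisym[rotated])
qed

lemma compactin_interior_KX_between:
  assumes lc: "neighbourhood_base_of (compactin X) X"
    and K: "compactin X K" "K \<noteq> {}" "K \<subseteq> W" "openin X W"
  obtains L where "L \<in> KX X" "K \<subseteq> X interior_of L" "L \<subseteq> W"
proof -
  define \<U> where "\<U> = {U. openin X U \<and> (\<exists>V. compactin X V \<and> U \<subseteq> V \<and> V \<subseteq> W)}"
  have open_\<U>: "\<And>U. U \<in> \<U> \<Longrightarrow> openin X U" unfolding \<U>_def by simp
  have "K \<subseteq> \<Union>\<U>"
  proof
    fix x assume "x \<in> K"
    then have "x \<in> W" using K(3) by blast
    then obtain U V where "openin X U" "compactin X V" "x \<in> U" "U \<subseteq> V" "V \<subseteq> W"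
      using lc K(4) unfolding neighbourhood_base_of by meson
    then show "x \<in> \<Union>\<U>" unfolding \<U>_def by blast
  qed
  from compactinD[OF K(1) open_\<U> this]
  obtain \<F> where \<F>: "finite \<F>" "\<F> \<subseteq> \<U>" "K \<subseteq> \<Union>\<F>" by blast
  then have "\<forall>U\<in>\<F>. \<exists>V. compactin X V \<and> U \<subseteq> V \<and> V \<subseteq> W" unfolding \<U>_def by blast
  then obtain g where g: "\<And>U. U \<in> \<F> \<Longrightarrow> compactin X (g U) \<and> U \<subseteq> g U \<and> g U \<subseteq> W"
    by metis
  define C where "C = \<Union>(g ` \<F>)"
  have C: "compactin X C" "\<Union>\<F> \<subseteq> C" "C \<subseteq> W"
    unfolding C_def using \<F>(1) g by (auto intro!: compactin_Union)
  have "C \<noteq> {}" using K(2) \<F>(3) C(2) by auto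
  have L: "upper_closure X C \<in> KX X" "upper_closure X C \<subseteq> W"
    using upper_closure_in_KX[OF C(1) \<open>C \<noteq> {}\<close>] upper_closure_subset_openin[OF K(4) C(3)] .
  have "C \<subseteq> upper_closure X C"
    using subset_upper_closure[OF compactin_subset_topspace[OF C(1)]] .
  then have "\<Union>\<F> \<subseteq> upper_closure X C" using C(2) by auto
  moreover have "openin X (\<Union>\<F>)" using \<F>(2) open_\<U> by (intro openin_Union) auto
  ultimately have "\<Union>\<F> \<subseteq> X interior_of upper_closure X C" by (rule interior_of_maximal)
  with \<F>(3) have "K \<subseteq> X interior_of upper_closure X C" by (rule order_trans)
  with L show thesis using that by blast
qed

definition KX_nbhds :: "'a topology \<Rightarrow> 'a set \<Rightarrow> 'a set set" where
  "KX_nbhds X K = {L \<in> KX X. K \<subseteq> X interior_of L}"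

lemma directed_KX_nbhds:
  assumes lc: "neighbourhood_base_of (compactin X) X" and K: "K \<in> KX X"
  shows "directed_in (KX X) KX_le (KX_nbhds X K)"
  unfolding directed_in_KX_iff
proof (intro conjI ballI)
  show "KX_nbhds X K \<subseteq> KX X" unfolding KX_nbhds_def by blast
  obtain L where "L \<in> KX X" "K \<subseteq> X interior_of L"
    using compactin_interior_KX_between[OF lc KXD(2,1)[OF K] KXD(4)[OF K] openin_topspace] .
  then show "KX_nbhds X K \<noteq> {}" unfolding KX_nbhds_def by blast
next
  fix A B assume "A \<in> KX_nbhds X K" "B \<in> KX_nbhds X K"
  then have KAB: "K \<subseteq> X interior_of A \<inter> X interior_of B" unfolding KX_nbhds_def by blast
  obtain L where L: "L \<in> KX X" "K \<subseteq> X interior_of L" "L \<subseteq> X interior_of A \<inter> X interior_of B"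
    by (rule compactin_interior_KX_between[OF lc KXD(2,1)[OF K] KAB])
      (intro openin_Int openin_interior_of)
  then have "L \<subseteq> A" "L \<subseteq> B" using interior_of_subset[of X A] interior_of_subset[of X B] by auto
  with L(1,2) show "\<exists>C\<in>KX_nbhds X K. C \<subseteq> A \<and> C \<subseteq> B"
    unfolding KX_nbhds_def by (intro bexI[of _ L]) auto
qed

lemma Inter_KX_nbhds:
  assumes lc: "neighbourhood_base_of (compactin X) X" and K: "K \<in> KX X"
  shows "\<Inter>(KX_nbhds X K) = K"
proof (rule antisym)
  show "K \<subseteq> \<Inter>(KX_nbhds X K)"
  proof (rule Inter_greatest)
    fix L assume "L \<in> KX_nbhds X K"
    then have "K \<subseteq> X interior_of L" by (simp add: KX_nbhds_def)
    then show "K \<subseteq> L" using interior_of_subset by (rule order_trans)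
  qed
  show "\<Inter>(KX_nbhds X K) \<subseteq> K"
  proof
    fix y assume y: "y \<in> \<Inter>(KX_nbhds X K)"
    show "y \<in> K"
    proof (rule ccontr)
      assume "y \<notin> K"
      obtain L where "L \<in> KX X" "K \<subseteq> X interior_of L"
        using compactin_interior_KX_between[OF lc KXD(2,1)[OF K] KXD(4)[OF K] openin_topspace] .
      then have "y \<in> topspace X" using y KXD(4)[of L X] unfolding KX_nbhds_def by blast
      then obtain W where W: "openin X W" "K \<subseteq> W" "y \<notin> W"
        using saturated_in_separate_point[OF KXD(3)[OF K] _ \<open>y \<notin> K\<close>] by blast
      obtain L' where "L' \<in> KX X" "K \<subseteq> X interior_of L'" "L' \<subseteq> W"
        using compactin_interior_KX_between[OF lc KXD(2,1)[OF K] W(2,1)] .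
      then show False using y W(3) unfolding KX_nbhds_def by blast
    qed
  qed
qed

lemma is_sup_in_KX_nbhds:
  assumes "neighbourhood_base_of (compactin X) X" "K \<in> KX X"
  shows "is_sup_in (KX X) KX_le (KX_nbhds X K) K"
  using is_sup_in_KX_iff[of "KX_nbhds X K" X K] Inter_KX_nbhds[OF assms] assms(2) by simp

lemma way_below_KX_iff_subset_interior:
  assumes wf: "well_filtered X" and lc: "neighbourhood_base_of (compactin X) X"
    and B: "B \<in> KX X"
  shows "way_below_in (KX X) KX_le A B \<longleftrightarrow> B \<subseteq> X interior_of A"
proof
  assume "way_below_in (KX X) KX_le A B"
  moreover have "\<Inter>(KX_nbhds X B) \<subseteq> B" using Inter_KX_nbhds[OF lc B] by simp
  ultimately obtain L where "L \<in> KX_nbhds X B" "L \<subseteq> A"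
    using directed_KX_nbhds[OF lc B] unfolding way_below_KX_iff[OF wf] by blast
  then have "B \<subseteq> X interior_of L" "X interior_of L \<subseteq> X interior_of A"
    unfolding KX_nbhds_def by (auto simp: interior_of_mono)
  then show "B \<subseteq> X interior_of A" by (rule order_trans)
qed (rule way_below_KX_if_subset_interior[OF wf])

lemma locally_compact_imp_property_Q:
  "well_filtered X \<Longrightarrow> neighbourhood_base_of (compactin X) X \<Longrightarrow> property_Q X"
  unfolding property_Q_def using way_below_KX_iff_subset_interior by blast

lemma locally_compact_imp_continuous_KX:
  assumes wf: "well_filtered X" and lc: "neighbourhood_base_of (compactin X) X"
  shows "continuous_in (KX X) KX_le"
  unfolding continuous_in_def
proof (intro conjI ballI directed_complete_KX[OF wf])
  fix K assume K: "K \<in> KX X"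
  have eq: "{A \<in> KX X. way_below_in (KX X) KX_le A K} = KX_nbhds X K"
    unfolding KX_nbhds_def way_below_KX_iff_subset_interior[OF wf lc K] ..
  show "directed_in (KX X) KX_le {A \<in> KX X. way_below_in (KX X) KX_le A K}"
    unfolding eq using directed_KX_nbhds[OF lc K] .
  show "is_sup_in (KX X) KX_le {A \<in> KX X. way_below_in (KX X) KX_le A K} K"
    unfolding eq using is_sup_in_KX_nbhds[OF lc K] .
qed

lemma locally_compact_imp_up_point_scott_continuous:
  assumes wf: "well_filtered X" and lc: "neighbourhood_base_of (compactin X) X"
  shows "continuous_map X (scott_topology (KX X) KX_le) (up_point X)"
  unfolding continuous_map topspace_scott_topology openin_scott_topology
proof (intro conjI allI impI)
  show "up_point X ` topspace X \<subseteq> KX X" using up_point_in_KX by auto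
next
  fix \<O> assume \<O>: "scott_open (KX X) KX_le \<O>"
  show "openin X {x \<in> topspace X. up_point X x \<in> \<O>}"
  proof (subst openin_subopen, intro ballI)
    fix x assume "x \<in> {x \<in> topspace X. up_point X x \<in> \<O>}"
    then have x: "x \<in> topspace X" "up_point X x \<in> \<O>" by auto
    have K: "up_point X x \<in> KX X" using up_point_in_KX[OF x(1)] .
    then obtain L where L: "L \<in> KX_nbhds X (up_point X x)" "L \<in> \<O>"
      using \<O> directed_KX_nbhds[OF lc K] is_sup_in_KX_nbhds[OF lc K] x(2)
      unfolding scott_open_def by blast
    have "X interior_of L \<subseteq> {x \<in> topspace X. up_point X x \<in> \<O>}"
    proof
      fix y assume y: "y \<in> X interior_of L"
      then have "y \<in> topspace X" using interior_of_subset_topspace[of X L] by auto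
      moreover have "up_point X y \<subseteq> L"
        using up_point_subset_openin[OF openin_interior_of y] interior_of_subset
        by (rule order_trans)
      moreover note up_point_in_KX[OF \<open>y \<in> topspace X\<close>]
      ultimately show "y \<in> {x \<in> topspace X. up_point X x \<in> \<O>}"
        using \<O> L(2) unfolding scott_open_def KX_le_def by blast
    qed
    moreover have "x \<in> X interior_of L"
      using L(1) mem_up_point[OF x(1)] unfolding KX_nbhds_def by auto
    ultimately show "\<exists>T. openin X T \<and> x \<in> T \<and> T \<subseteq> {x \<in> topspace X. up_point X x \<in> \<O>}"
      using openin_interior_of[of X L] by blast
  qed
qed

lemma locally_compact_imp_core_compact:
  assumes "neighbourhood_base_of (compactin X) X"
  shows "core_compact X"
  unfolding core_compact_iff
proof (intro allI impI)
  fix U x assume "openin X U \<and> x \<in> U"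
  then obtain V C where "openin X V" "compactin X C" "x \<in> V" "V \<subseteq> C" "C \<subseteq> U"
    using assms unfolding neighbourhood_base_of by meson
  moreover have "way_below_open X V U"
    using way_below_open_if_compactin_between \<open>compactin X C\<close> \<open>V \<subseteq> C\<close> \<open>C \<subseteq> U\<close> .
  ultimately show "\<exists>V. openin X V \<and> way_below_open X V U \<and> x \<in> V" by blast
qed

section \<open>Continuity of \<open>K(X)\<close> in a first-countable space\<close>

lemma Inter_from_nat_into_atMost_subset:
  assumes "countable \<C>" "V \<in> \<C>"
  obtains i where "\<And>m. i \<le> m \<Longrightarrow> \<Inter>(from_nat_into \<C> ` {..m}) \<subseteq> V"
proof -
  obtain i where "from_nat_into \<C> i = V" using from_nat_into_surj[OF assms] by blast
  then have "\<Inter>(from_nat_into \<C> ` {..m}) \<subseteq> V" if "i \<le> m" for m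
    using that by (auto intro: Inter_lower)
  then show thesis using that by blast
qed

lemma first_countable_decreasing_base:
  assumes "first_countable X" "x \<in> topspace X"
  obtains B :: "nat \<Rightarrow> 'a set" where "\<And>n. openin X (B n)" "\<And>n. x \<in> B n" "decseq B"
    "\<And>T. openin X T \<Longrightarrow> x \<in> T \<Longrightarrow> \<exists>n. B n \<subseteq> T"
proof -
  obtain \<B> where \<B>: "countable \<B>" "\<forall>V\<in>\<B>. openin X V"
    "\<forall>U. openin X U \<and> x \<in> U \<longrightarrow> (\<exists>V\<in>\<B>. x \<in> V \<and> V \<subseteq> U)"
    using bspec[OF assms[unfolded first_countable_def]] by auto
  define \<C> where "\<C> = {V\<in>\<B>. x \<in> V}"
  have "countable \<C>" unfolding \<C>_def using \<B>(1) by simp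
  have "\<C> \<noteq> {}" unfolding \<C>_def using \<B>(3) assms(2) by fastforce
  then have c: "from_nat_into \<C> n \<in> \<B> \<and> x \<in> from_nat_into \<C> n" for n
    using from_nat_into[OF \<open>\<C> \<noteq> {}\<close>, of n] unfolding \<C>_def by simp
  define B where "B n = \<Inter>(from_nat_into \<C> ` {..n})" for n
  show thesis
  proof (rule that)
    show "openin X (B n)" for n
      unfolding B_def using c \<B>(2) by (intro openin_Inter) auto
    show "x \<in> B n" for n unfolding B_def using c by blast
    show "decseq B" unfolding B_def decseq_def by auto
  next
    fix T assume "openin X T" "x \<in> T"
    then obtain V where "V \<in> \<B>" "x \<in> V" "V \<subseteq> T" using \<B>(3) by meson
    then have "V \<in> \<C>" unfolding \<C>_def by blast
    obtain i where "\<And>m. i \<le> m \<Longrightarrow> B m \<subseteq> V"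
      using Inter_from_nat_into_atMost_subset[OF \<open>countable \<C>\<close> \<open>V \<in> \<C>\<close>]
      unfolding B_def by blast
    then have "B i \<subseteq> T" using \<open>V \<subseteq> T\<close> by (meson order_refl order_trans)
    then show "\<exists>n. B n \<subseteq> T" ..
  qed
qed

lemma first_countable_sequence_outside_interior:
  assumes "first_countable X" "x \<in> topspace X" "x \<notin> X interior_of K"
  obtains y where "limitin X y x sequentially" "\<And>n. y n \<in> topspace X - K"
proof -
  obtain B :: "nat \<Rightarrow> 'a set" where B: "\<And>n. openin X (B n)" "\<And>n. x \<in> B n" "decseq B"
    "\<And>T. openin X T \<Longrightarrow> x \<in> T \<Longrightarrow> \<exists>n. B n \<subseteq> T"
    using first_countable_decreasing_base[OF assms(1,2)] by blast
  have "\<not> B n \<subseteq> K" for n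
    using interior_of_maximal[OF _ B(1)] B(2) assms(3) by blast
  then have "\<forall>n. \<exists>z. z \<in> B n - K" unfolding subset_iff by blast
  then obtain y where y: "\<And>n. y n \<in> B n - K" by metis
  have "limitin X y x sequentially"
    unfolding limitin_sequentially
  proof (intro conjI allI impI assms(2))
    fix T assume "openin X T \<and> x \<in> T"
    then obtain N where "B N \<subseteq> T" using B(4) by blast
    then have "\<forall>n\<ge>N. y n \<in> T" using y decseqD[OF B(3)] by blast
    then show "\<exists>N. \<forall>n. N \<le> n \<longrightarrow> y n \<in> T" by blast
  qed
  moreover have "y n \<in> topspace X - K" for n using y openin_subset[OF B(1)] by blast
  ultimately show thesis using that by blast
qed

lemma upper_closure_tail_in_KX:
  assumes "limitin X y l sequentially" "\<And>n. y n \<in> topspace X"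
  shows "upper_closure X (insert l (y ` {n..})) \<in> KX X"
proof -
  have "compactin X (insert l (y ` {n..}))"
    using assms by (intro compactin_sequence_with_limit) auto
  then show ?thesis by (rule upper_closure_in_KX) simp
qed

text \<open>If \<open>K \<ll> \<up>x\<close> but \<open>x\<close> is not interior to \<open>K\<close>, a sequence outside \<open>K\<close> converging to \<open>x\<close>
  yields a filtered family of compact saturated sets with intersection inside \<open>\<up>x\<close>, none of
  which lies in \<open>K\<close>.\<close>

lemma way_below_up_point_imp_interior:
  assumes wf: "well_filtered X" and fc: "first_countable X" and x: "x \<in> topspace X"
    and wb: "way_below_in (KX X) KX_le K (up_point X x)"
  shows "x \<in> X interior_of K"
proof (rule ccontr)
  assume "x \<notin> X interior_of K"
  then obtain y where lim: "limitin X y x sequentially" and y: "\<And>n. y n \<in> topspace X - K"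
    using first_countable_sequence_outside_interior[OF fc x] by blast
  define Q where "Q n = upper_closure X (insert x (y ` {n..}))" for n
  have QK: "Q n \<in> KX X" for n
    unfolding Q_def using y by (intro upper_closure_tail_in_KX[OF lim]) blast
  have "decseq Q"
    unfolding Q_def decseq_def by (intro allI impI upper_closure_mono) auto
  then have dir: "directed_in (KX X) KX_le (range Q)"
    by (rule directed_in_KX_decseq[OF QK])
  have "\<Inter>(range Q) \<subseteq> up_point X x"
  proof
    fix z assume z: "z \<in> \<Inter>(range Q)"
    have "z \<in> T" if T: "openin X T" "x \<in> T" for T
    proof -
      obtain N where "\<forall>n\<ge>N. y n \<in> T"
        using limitinD[OF lim T] unfolding eventually_sequentially by blast
      then have "insert x (y ` {N..}) \<subseteq> T" using \<open>x \<in> T\<close> by auto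
      then have "Q N \<subseteq> T" unfolding Q_def by (rule upper_closure_subset_openin[OF \<open>openin X T\<close>])
      then show "z \<in> T" using z by blast
    qed
    moreover have "z \<in> topspace X" using z KXD(4)[OF QK[of 0]] by blast
    ultimately show "z \<in> up_point X x"
      unfolding up_point_def spec_le_iff_openin using x by blast
  qed
  then obtain n where "Q n \<subseteq> K"
    using wb dir unfolding way_below_KX_iff[OF wf] by blast
  moreover have "y n \<in> Q n"
    unfolding Q_def using subset_upper_closure[of "insert x (y ` {n..})" X] x y by blast
  ultimately show False using y by blast
qed

lemma continuous_KX_imp_locally_compact:
  assumes wf: "well_filtered X" and fc: "first_countable X" and cont: "continuous_in (KX X) KX_le"
  shows "neighbourhood_base_of (compactin X) X"
  unfolding neighbourhood_base_of
proof (intro allI impI)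
  fix W x assume "openin X W \<and> x \<in> W"
  then have W: "openin X W" "x \<in> W" and x: "x \<in> topspace X" using openin_subset by auto
  define A where "A = {K \<in> KX X. way_below_in (KX X) KX_le K (up_point X x)}"
  have dir: "directed_in (KX X) KX_le A" and "is_sup_in (KX X) KX_le A (up_point X x)"
    using cont up_point_in_KX[OF x] unfolding continuous_in_def A_def by blast+
  then have "\<Inter>A = up_point X x"
    using is_sup_in_KX_iff[OF well_filtered_Inter_in_KX[OF wf dir]] by simp
  moreover have "up_point X x \<subseteq> W" using up_point_subset_openin[OF W] .
  ultimately have "\<Inter>A \<subseteq> W" by simp
  then obtain K where "K \<in> A" "K \<subseteq> W" using well_filteredD[OF wf W(1) dir] by blast
  then have K: "K \<in> KX X" "x \<in> X interior_of K"
    using way_below_up_point_imp_interior[OF wf fc x] unfolding A_def by auto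
  show "\<exists>U V. openin X U \<and> compactin X V \<and> x \<in> U \<and> U \<subseteq> V \<and> V \<subseteq> W"
  proof (intro exI conjI)
    show "openin X (X interior_of K)" by (rule openin_interior_of)
    show "compactin X K" using KXD(2)[OF K(1)] .
    show "X interior_of K \<subseteq> K" by (rule interior_of_subset)
  qed (use K(2) \<open>K \<subseteq> W\<close> in auto)
qed

section \<open>Core compactness in a second-countable space\<close>

definition prime_open :: "'a topology \<Rightarrow> 'a set \<Rightarrow> bool" where
  "prime_open X P \<longleftrightarrow> openin X P \<and> \<not> topspace X \<subseteq> P \<and>
     (\<forall>P1 P2. openin X P1 \<and> openin X P2 \<and> P1 \<inter> P2 \<subseteq> P \<longrightarrow> P1 \<subseteq> P \<or> P2 \<subseteq> P)"

text \<open>Intersecting an enumeration of the basic open sets not contained in a prime open \<open>P\<close>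
  yields a sequence outside \<open>P\<close> that eventually enters every open set not contained in \<open>P\<close>.\<close>

lemma second_countable_prime_open_sequence:
  assumes sc: "second_countable X" and P: "prime_open X P"
  obtains a :: "nat \<Rightarrow> 'a" where "\<And>n. a n \<in> topspace X - P"
    "\<And>W. openin X W \<Longrightarrow> \<not> W \<subseteq> P \<Longrightarrow> \<exists>N. \<forall>m\<ge>N. a m \<in> W"
proof -
  obtain \<B> where \<B>: "countable \<B>" "\<forall>V\<in>\<B>. openin X V"
    "\<forall>U x. openin X U \<and> x \<in> U \<longrightarrow> (\<exists>V\<in>\<B>. x \<in> V \<and> V \<subseteq> U)"
    using sc unfolding second_countable_def by auto
  define \<C> where "\<C> = {V\<in>\<B>. \<not> V \<subseteq> P}"
  define c where "c = from_nat_into \<C>"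
  define I where "I n = \<Inter>(c ` {..n})" for n
  have base: "\<exists>V\<in>\<C>. w \<in> V \<and> V \<subseteq> W" if W: "openin X W" "w \<in> W" "w \<notin> P" for W w
  proof -
    obtain V where "V \<in> \<B>" "w \<in> V" "V \<subseteq> W" using \<B>(3) W(1,2) by meson
    with W(3) show ?thesis unfolding \<C>_def by blast
  qed
  have "\<C> \<noteq> {}" using base[OF openin_topspace] P unfolding prime_open_def by blast
  then have c: "openin X (c n) \<and> \<not> c n \<subseteq> P" for n
    using from_nat_into[OF \<open>\<C> \<noteq> {}\<close>, of n] \<B>(2) unfolding c_def \<C>_def by auto
  have open_I: "openin X (I n)" for n
    unfolding I_def using c by (intro openin_Inter) auto
  have "\<not> I n \<subseteq> P" for n
  proof (induction n)
    case 0
    then show ?case using c unfolding I_def by simp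
  next
    case (Suc n)
    have "I (Suc n) = I n \<inter> c (Suc n)" unfolding I_def by (auto simp: atMost_Suc)
    then show ?case using Suc.IH c P open_I unfolding prime_open_def by metis
  qed
  then have "\<forall>n. \<exists>z. z \<in> I n - P" unfolding subset_iff by blast
  then obtain a where a: "\<And>n. a n \<in> I n - P" by metis
  have a_out: "a n \<in> topspace X - P" for n using a openin_subset[OF open_I] by blast
  have a_tail: "\<exists>N. \<forall>m\<ge>N. a m \<in> W" if W: "openin X W" "\<not> W \<subseteq> P" for W
  proof -
    obtain V where "V \<in> \<C>" "V \<subseteq> W" using base W by blast
    then obtain i where "\<And>m. i \<le> m \<Longrightarrow> I m \<subseteq> V"
      using Inter_from_nat_into_atMost_subset[of \<C> V] \<B>(1)
      unfolding I_def c_def \<C>_def by auto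
    then have "\<forall>m\<ge>i. a m \<in> W" using a \<open>V \<subseteq> W\<close> by blast
    then show ?thesis by blast
  qed
  show thesis by (rule that[OF a_out a_tail])
qed

text \<open>In a well-filtered space the upper closures of the tails of such a sequence have a
  common point outside \<open>P\<close>; it is a generic point of the complement of \<open>P\<close>.\<close>

lemma well_filtered_prime_open_point:
  assumes wf: "well_filtered X" and P: "openin X P"
    and a: "\<And>n::nat. a n \<in> topspace X - P"
    and tail: "\<And>W. openin X W \<Longrightarrow> \<not> W \<subseteq> P \<Longrightarrow> \<exists>N. \<forall>m\<ge>N. a m \<in> W"
  obtains y where "y \<in> topspace X - P" "\<And>W. openin X W \<Longrightarrow> \<not> W \<subseteq> P \<Longrightarrow> y \<in> W"
proof -
  define Q where "Q n = upper_closure X (a ` {n..})" for n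
  have QK: "Q n \<in> KX X" for n
  proof -
    have "limitin X a (a n) sequentially"
      unfolding limitin_sequentially using a tail by blast
    then have "upper_closure X (insert (a n) (a ` {n..})) \<in> KX X"
      using a by (intro upper_closure_tail_in_KX) auto
    moreover have "insert (a n) (a ` {n..}) = a ` {n..}" by auto
    ultimately show ?thesis unfolding Q_def by simp
  qed
  have "decseq Q"
    unfolding Q_def decseq_def by (intro allI impI upper_closure_mono) auto
  then have dir: "directed_in (KX X) KX_le (range Q)"
    by (rule directed_in_KX_decseq[OF QK])
  have aQ: "a n \<in> Q n" for n
    unfolding Q_def using subset_upper_closure[of "a ` {n..}" X] a by blast
  have "\<not> \<Inter>(range Q) \<subseteq> P"
  proof
    assume "\<Inter>(range Q) \<subseteq> P"
    then obtain n where "Q n \<subseteq> P" using well_filteredD[OF wf P dir] by blast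
    then show False using aQ a by blast
  qed
  then obtain y where y: "y \<in> \<Inter>(range Q)" "y \<notin> P" by blast
  show thesis
  proof (rule that)
    show "y \<in> topspace X - P" using y KXD(4)[OF QK[of 0]] by blast
  next
    fix W assume W: "openin X W" "\<not> W \<subseteq> P"
    then obtain N where "\<forall>m\<ge>N. a m \<in> W" using tail by blast
    then have "a ` {N..} \<subseteq> W" by auto
    then have "Q N \<subseteq> W" unfolding Q_def by (rule upper_closure_subset_openin[OF W(1)])
    then show "y \<in> W" using y by blast
  qed
qed

lemma prime_open_generic_point:
  assumes "second_countable X" "well_filtered X" "prime_open X P"
  obtains y where "y \<in> topspace X - P" "\<And>W. openin X W \<Longrightarrow> \<not> W \<subseteq> P \<Longrightarrow> y \<in> W"
proof -
  obtain a :: "nat \<Rightarrow> 'a" where a: "\<And>n. a n \<in> topspace X - P"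
    "\<And>W. openin X W \<Longrightarrow> \<not> W \<subseteq> P \<Longrightarrow> \<exists>N. \<forall>m\<ge>N. a m \<in> W"
    using second_countable_prime_open_sequence[OF assms(1,3)] by blast
  have "openin X P" using assms(3) unfolding prime_open_def by blast
  from well_filtered_prime_open_point[OF assms(2) this a] that show thesis by blast
qed

definition way_below_chain :: "'a topology \<Rightarrow> (nat \<Rightarrow> 'a set) \<Rightarrow> bool" where
  "way_below_chain X W \<longleftrightarrow> (\<forall>n. openin X (W n) \<and> way_below_open X (W (Suc n)) (W n))"

lemma way_below_chain_decseq:
  assumes "way_below_chain X W"
  shows "decseq W"
proof (rule decseq_SucI)
  fix n
  show "W (Suc n) \<subseteq> W n"
    using assms way_below_open_imp_subset unfolding way_below_chain_def by blast
qed

lemma way_below_chain_exists: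
  assumes cc: "core_compact X" and U: "openin X U" and VU: "way_below_open X V U"
  obtains W where "way_below_chain X W" "W 0 = U" "\<And>n. way_below_open X V (W n)"
proof -
  define step where "step U' = (SOME W'. openin X W' \<and> way_below_open X V W' \<and> way_below_open X W' U')"
    for U'
  have step: "openin X (step U') \<and> way_below_open X V (step U') \<and> way_below_open X (step U') U'"
    if "openin X U'" "way_below_open X V U'" for U'
    unfolding step_def
    by (rule someI_ex) (use way_below_open_interpolate[OF cc that] in blast)
  define W where "W = rec_nat U (\<lambda>_. step)"
  have W_Suc: "W (Suc n) = step (W n)" for n unfolding W_def by simp
  have inv: "openin X (W n) \<and> way_below_open X V (W n)" for n
    by (induction n) (use U VU step in \<open>auto simp: W_def\<close>)
  have "way_below_chain X W"
    unfolding way_below_chain_def W_Suc using inv step by blast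
  moreover have "W 0 = U" unfolding W_def by simp
  ultimately show thesis using that inv by blast
qed

text \<open>Zorn's lemma gives an open set maximal among those containing \<open>G\<close> but no member of the
  chain; maximality together with \<open>W (Suc n) \<ll> W n\<close> makes it prime.\<close>

lemma way_below_chain_prime_open_avoiding:
  assumes W: "way_below_chain X W" and G: "openin X G" "\<And>n. \<not> W n \<subseteq> G"
  obtains M where "prime_open X M" "G \<subseteq> M" "\<And>n. \<not> W n \<subseteq> M"
proof -
  define \<S> where "\<S> = {P. openin X P \<and> G \<subseteq> P \<and> (\<forall>n. \<not> W n \<subseteq> P)}"
  have "\<Union>\<C> \<in> \<S>" if "\<C> \<noteq> {}" "subset.chain \<S> \<C>" for \<C>
  proof -
    have \<C>: "\<C> \<subseteq> \<S>" "\<forall>A\<in>\<C>. \<forall>B\<in>\<C>. A \<subseteq> B \<or> B \<subseteq> A"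
      using that(2) unfolding subset_chain_def by auto
    have "directed_opens X \<C>"
      unfolding directed_opens_def
    proof (intro conjI ballI \<open>\<C> \<noteq> {}\<close>)
      show "openin X d" if "d \<in> \<C>" for d using that \<C>(1) unfolding \<S>_def by blast
    next
      fix a b assume "a \<in> \<C>" "b \<in> \<C>"
      then consider "a \<subseteq> b" | "b \<subseteq> a" using \<C>(2) by blast
      then show "\<exists>c\<in>\<C>. a \<subseteq> c \<and> b \<subseteq> c"
        by cases (use \<open>a \<in> \<C>\<close> \<open>b \<in> \<C>\<close> in auto)
    qed
    moreover have "\<not> W n \<subseteq> \<Union>\<C>" for n
    proof
      assume "W n \<subseteq> \<Union>\<C>"
      then obtain P where "P \<in> \<C>" "W (Suc n) \<subseteq> P"
        using way_below_openD \<open>directed_opens X \<C>\<close> W unfolding way_below_chain_def by blast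
      then show False using \<C>(1) unfolding \<S>_def by blast
    qed
    moreover have "G \<subseteq> \<Union>\<C>" using \<C>(1) that(1) unfolding \<S>_def by blast
    ultimately show ?thesis
      unfolding \<S>_def using openin_Union[of \<C> X] unfolding directed_opens_def by auto
  qed
  moreover have "G \<in> \<S>" unfolding \<S>_def using G by blast
  ultimately obtain M where M: "M \<in> \<S>" "\<And>P. P \<in> \<S> \<Longrightarrow> M \<subseteq> P \<Longrightarrow> P = M"
    using subset_Zorn_nonempty[of \<S>] by blast
  then have M': "openin X M" "G \<subseteq> M" "\<And>n. \<not> W n \<subseteq> M" unfolding \<S>_def by auto
  have enters: "\<exists>k. W k \<subseteq> M \<union> P" if P: "openin X P" "\<not> P \<subseteq> M" for P
  proof (rule ccontr)
    assume "\<nexists>k. W k \<subseteq> M \<union> P"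
    then have "M \<union> P \<in> \<S>" unfolding \<S>_def using M' P(1) by auto
    then show False using M(2)[of "M \<union> P"] P(2) by blast
  qed
  have "P1 \<subseteq> M \<or> P2 \<subseteq> M" if P: "openin X P1" "openin X P2" "P1 \<inter> P2 \<subseteq> M" for P1 P2
  proof (rule ccontr)
    assume "\<not> (P1 \<subseteq> M \<or> P2 \<subseteq> M)"
    then obtain k1 k2 where "W k1 \<subseteq> M \<union> P1" "W k2 \<subseteq> M \<union> P2"
      using enters P(1,2) by meson
    moreover have "W (max k1 k2) \<subseteq> W k1" "W (max k1 k2) \<subseteq> W k2"
      using decseqD[OF way_below_chain_decseq[OF W]] by auto
    ultimately have "W (max k1 k2) \<subseteq> M" using P(3) by blast
    then show False using M'(3) by blast
  qed
  moreover have "\<not> topspace X \<subseteq> M"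
    using M'(3)[of 0] openin_subset W unfolding way_below_chain_def by blast
  ultimately have "prime_open X M" unfolding prime_open_def using M'(1) by blast
  then show thesis using that M'(2,3) by blast
qed

lemma way_below_chain_Inter_subset_openin:
  assumes sc: "second_countable X" and wf: "well_filtered X" and W: "way_below_chain X W"
    and G: "openin X G" "\<Inter>(range W) \<subseteq> G"
  shows "\<exists>n. W n \<subseteq> G"
proof (rule ccontr)
  assume "\<nexists>n. W n \<subseteq> G"
  then obtain M where M: "prime_open X M" "G \<subseteq> M" "\<And>n. \<not> W n \<subseteq> M"
    using way_below_chain_prime_open_avoiding[OF W G(1)] by blast
  then obtain y where "y \<in> topspace X - M" "\<And>U. openin X U \<Longrightarrow> \<not> U \<subseteq> M \<Longrightarrow> y \<in> U"
    using prime_open_generic_point[OF sc wf] by blast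
  moreover have "openin X (W n)" for n using W unfolding way_below_chain_def by blast
  ultimately have "y \<in> \<Inter>(range W)" using M(3) by blast
  then show False using G(2) M(2) \<open>y \<in> topspace X - M\<close> by blast
qed

lemma way_below_chain_Inter_compactin:
  assumes W: "way_below_chain X W"
    and filter: "\<And>G. openin X G \<Longrightarrow> \<Inter>(range W) \<subseteq> G \<Longrightarrow> \<exists>n. W n \<subseteq> G"
  shows "compactin X (\<Inter>(range W))"
  unfolding compactin_def
proof (intro conjI allI impI)
  show "\<Inter>(range W) \<subseteq> topspace X"
    using W openin_subset unfolding way_below_chain_def by blast
next
  fix \<U> assume "(\<forall>U\<in>\<U>. openin X U) \<and> \<Inter>(range W) \<subseteq> \<Union>\<U>"
  then have \<U>: "\<forall>U\<in>\<U>. openin X U" "\<Inter>(range W) \<subseteq> \<Union>\<U>" by auto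
  then obtain n where n: "W n \<subseteq> \<Union>\<U>" using filter[of "\<Union>\<U>"] by blast
  define D where "D = {\<Union>F | F. finite F \<and> F \<subseteq> \<U>}"
  have "directed_opens X D"
    unfolding directed_opens_def
  proof (intro conjI ballI)
    show "D \<noteq> {}" unfolding D_def by blast
  next
    fix d assume "d \<in> D" then show "openin X d" unfolding D_def using \<U>(1) by blast
  next
    fix a b assume "a \<in> D" "b \<in> D"
    then obtain F1 F2 where F: "a = \<Union>F1" "finite F1" "F1 \<subseteq> \<U>" "b = \<Union>F2" "finite F2" "F2 \<subseteq> \<U>"
      unfolding D_def by blast
    have "\<Union>(F1 \<union> F2) \<in> D"
      unfolding D_def using F by (intro CollectI exI[of _ "F1 \<union> F2"]) auto
    moreover have "a \<subseteq> \<Union>(F1 \<union> F2)" "b \<subseteq> \<Union>(F1 \<union> F2)" using F by auto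
    ultimately show "\<exists>c\<in>D. a \<subseteq> c \<and> b \<subseteq> c" by blast
  qed
  moreover have "\<Union>\<U> \<subseteq> \<Union>D" unfolding D_def by blast
  ultimately obtain d where "d \<in> D" "W (Suc n) \<subseteq> d"
    using way_below_openD W n unfolding way_below_chain_def by (meson order_trans)
  then obtain F where "finite F" "F \<subseteq> \<U>" "W (Suc n) \<subseteq> \<Union>F" unfolding D_def by blast
  moreover have "\<Inter>(range W) \<subseteq> W (Suc n)" by blast
  ultimately show "\<exists>\<F>. finite \<F> \<and> \<F> \<subseteq> \<U> \<and> \<Inter>(range W) \<subseteq> \<Union>\<F>" by blast
qed

lemma core_compact_imp_locally_compact:
  assumes sc: "second_countable X" and wf: "well_filtered X" and cc: "core_compact X"
  shows "neighbourhood_base_of (compactin X) X"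
  unfolding neighbourhood_base_of
proof (intro allI impI)
  fix U x assume Ux: "openin X U \<and> x \<in> U"
  then obtain V where V: "openin X V" "way_below_open X V U" "x \<in> V"
    using cc unfolding core_compact_iff by blast
  then obtain W where W: "way_below_chain X W" "W 0 = U" "\<And>n. way_below_open X V (W n)"
    using way_below_chain_exists[OF cc] Ux by blast
  have "V \<subseteq> \<Inter>(range W)"
    using W(1,3) way_below_open_imp_subset unfolding way_below_chain_def by blast
  moreover have "\<Inter>(range W) \<subseteq> U" using W(2) by blast
  moreover have "compactin X (\<Inter>(range W))"
    using way_below_chain_Inter_compactin[OF W(1) way_below_chain_Inter_subset_openin[OF sc wf W(1)]] .
  ultimately show "\<exists>V K. openin X V \<and> compactin X K \<and> x \<in> V \<and> V \<subseteq> K \<and> K \<subseteq> U"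
    using V(1,3) by blast
qed

theorem mainTheorem17:
  fixes X :: "'a topology"
  assumes "t0_space X" and "second_countable X" and "well_filtered X"
  shows "(neighbourhood_base_of (compactin X) X
            \<longleftrightarrow> continuous_in (KX X) KX_le \<and>
                continuous_map X (scott_topology (KX X) KX_le) (up_point X))
       \<and> (continuous_in (KX X) KX_le \<and>
                continuous_map X (scott_topology (KX X) KX_le) (up_point X)
            \<longleftrightarrow> continuous_in (KX X) KX_le \<and> property_Q X)
       \<and> (continuous_in (KX X) KX_le \<and> property_Q X
            \<longleftrightarrow> continuous_in (KX X) KX_le)
       \<and> (continuous_in (KX X) KX_le \<longleftrightarrow> core_compact X)"
proof -
  have sc: "second_countable X" and wf: "well_filtered X" using assms by blast+
  have fc: "first_countable X" using second_countable_imp_first_countable[OF sc] .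
  have "neighbourhood_base_of (compactin X) X \<Longrightarrow> continuous_in (KX X) KX_le"
    using locally_compact_imp_continuous_KX[OF wf] .
  moreover have "neighbourhood_base_of (compactin X) X \<Longrightarrow>
      continuous_map X (scott_topology (KX X) KX_le) (up_point X)"
    using locally_compact_imp_up_point_scott_continuous[OF wf] .
  moreover have "neighbourhood_base_of (compactin X) X \<Longrightarrow> property_Q X"
    using locally_compact_imp_property_Q[OF wf] .
  moreover have "neighbourhood_base_of (compactin X) X \<Longrightarrow> core_compact X"
    using locally_compact_imp_core_compact .
  moreover have "continuous_in (KX X) KX_le \<Longrightarrow> neighbourhood_base_of (compactin X) X"
    using continuous_KX_imp_locally_compact[OF wf fc] .
  moreover have "core_compact X \<Longrightarrow> neighbourhood_base_of (compactin X) X"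
    using core_compact_imp_locally_compact[OF sc wf] .
  ultimately show ?thesis by blast
qed

end
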